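(* For each $j\in\mathbb{Z}_{\geq0}$ let $(t_{j,n})_{n\ge1}$ be a sequence of nonnegative reals, and define $(s_{j,n})_{n\ge1}$ recursively by $s_{j,1}=t_{j,1}$ and $s_{j,n}=\sum_{i=0}^{j}s_{i,n-1}t_{j-i,n}$ for $n\ge2$. Suppose that for every $j\in\mathbb{Z}_{\ge0}$, \[ t_{j,n}=\frac{1}{j!\,n^j}\left(1-\frac1n\right)+O\!\left(\frac{1}{n^{j+2}}\right)\quad(n\to\infty). \] Then for every $j\in\mathbb{Z}_{\ge0}$, $s_{j,n}=O\!\left(n^{-1/(j+1)}\right)$ as $n\to\infty$.
   Context: Implied constants in $O(\cdot)$ may depend on $j$. *)

theory Defs
  imports "HOL-Analysis.Analysis" "HOL-Library.Landau_Symbols"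
begin

text \<open>The sequence s_{j,n} built from t_{j,n} (indices n >= 1; the value at n = 0 is an
  irrelevant convention set to 0).\<close>
fun sseq :: "(nat \<Rightarrow> nat \<Rightarrow> real) \<Rightarrow> nat \<Rightarrow> nat \<Rightarrow> real" where
  "sseq t j 0 = 0"
| "sseq t j (Suc 0) = t j 1"
| "sseq t j (Suc (Suc m)) = (\<Sum>i\<le>j. sseq t i (Suc m) * t (j - i) (Suc (Suc m)))"

end

theory Submission
  imports Defs
begin

text \<open>
  Induction on j, with \<alpha> = 1/(j+1). The recursion reads
  s(j, n+1) = t(0, n+1) s(j, n) + \<Sum>i<j. s(i, n) t(j-i, n+1),
  where t(k, n) = O(1/n) for k \<ge> 1 and, inductively, s(i, n) = O(n powr -\<alpha>) for i < j;
  so the sum is O(n powr -\<alpha> / n). Since t(0, n) \<le> 1 - 1/n + C/n^2, multiplying by the weight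
  n + 2C gives (n+1+2C) s(j, n+1) \<le> (n+2C) s(j, n) + O(n powr -\<alpha>), which telescopes to
  n s(j, n) = O(n powr (1-\<alpha>)) because \<Sum>m\<le>n. m powr -\<alpha> \<le> n powr (1-\<alpha>)/(1-\<alpha>) for \<alpha> < 1.
  For j = 0 the sum is empty, so \<alpha> = 1 does no harm.
\<close>

lemma powr_diff_Suc_ge:
  fixes p :: real
  assumes "0 < p" "p < 1" "n \<ge> 1"
  shows "p * real (Suc n) powr (p - 1) \<le> real (Suc n) powr p - real n powr p"
proof -
  have "\<exists>z::real. real n < z \<and> z < real (Suc n) \<and>
     real (Suc n) powr p - real n powr p = (real (Suc n) - real n) * (p * z powr (p - 1))"
    by (rule MVT2) (use assms in \<open>auto intro!: has_real_derivative_powr\<close>)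
  then obtain z where z: "real n < z" "z < real (Suc n)"
     "real (Suc n) powr p - real n powr p = p * z powr (p - 1)" by auto
  have "real (Suc n) powr (p - 1) \<le> z powr (p - 1)"
    using z assms by (intro powr_mono2') auto
  then show ?thesis using z assms by (simp add: mult_left_mono)
qed

lemma sum_powr_neg_le:
  fixes \<alpha> :: real
  assumes "0 < \<alpha>" "\<alpha> < 1"
  shows "(\<Sum>m=1..n. real m powr (-\<alpha>)) \<le> real n powr (1 - \<alpha>) / (1 - \<alpha>)"
proof (induction n)
  case 0 then show ?case by simp
next
  case (Suc n)
  show ?case
  proof (cases "n = 0")
    case True then show ?thesis using assms by (simp add: field_simps)
  next
    case False
    have "(1 - \<alpha>) * real (Suc n) powr (-\<alpha>) \<le> real (Suc n) powr (1 - \<alpha>) - real n powr (1 - \<alpha>)"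
      using powr_diff_Suc_ge[of "1 - \<alpha>" n] assms False by simp
    then have step: "real (Suc n) powr (-\<alpha>) \<le> (real (Suc n) powr (1 - \<alpha>) - real n powr (1 - \<alpha>)) / (1 - \<alpha>)"
      using assms by (simp add: pos_le_divide_eq mult.commute)
    have "(\<Sum>m=1..Suc n. real m powr (-\<alpha>)) = (\<Sum>m=1..n. real m powr (-\<alpha>)) + real (Suc n) powr (-\<alpha>)"
      by simp
    also have "\<dots> \<le> real n powr (1 - \<alpha>) / (1 - \<alpha>) + real (Suc n) powr (-\<alpha>)"
      using Suc.IH by simp
    also have "\<dots> \<le> real (Suc n) powr (1 - \<alpha>) / (1 - \<alpha>)"
      using step by (simp add: diff_divide_distrib)
    finally show ?thesis .
  qed
qed

lemma weighted_recurrence_bound: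
  fixes a :: "nat \<Rightarrow> real" and \<alpha> c E :: real
  assumes "0 < \<alpha>" "\<alpha> \<le> 1" "c \<ge> 0" "E \<ge> 0" "\<alpha> = 1 \<Longrightarrow> E = 0" "N \<ge> 1"
    and nonneg: "\<And>m. m \<ge> N \<Longrightarrow> a m \<ge> 0"
    and rec: "\<And>m. m \<ge> N \<Longrightarrow>
      (real m + 1 + c) * a (Suc m) \<le> (real m + c) * a m + E * real m powr (-\<alpha>)"
  shows "\<exists>K. \<forall>n\<ge>N. a n \<le> K * real n powr (-\<alpha>)"
proof -
  define u where "u n = (real n + c) * a n" for n
  have telescope: "u n \<le> u N + E * (\<Sum>m\<in>{N..<n}. real m powr (-\<alpha>))" if "N \<le> n" for n
    using that
  proof (induction n rule: dec_induct)
    case base then show ?case by simp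
  next
    case (step n)
    have "u (Suc n) \<le> u n + E * real n powr (-\<alpha>)"
      using rec[of n] step by (simp add: u_def add.commute add.left_commute)
    then show ?case using step by (simp add: sum.atLeastLessThan_Suc algebra_simps)
  qed
  have sum_le: "E * (\<Sum>m\<in>{N..<n}. real m powr (-\<alpha>)) \<le> E / (1 - \<alpha>) * real n powr (1 - \<alpha>)" for n
  proof (cases "\<alpha> = 1")
    case False
    have "(\<Sum>m\<in>{N..<n}. real m powr (-\<alpha>)) \<le> (\<Sum>m=1..n. real m powr (-\<alpha>))"
      using assms by (intro sum_mono2) auto
    also have "\<dots> \<le> real n powr (1 - \<alpha>) / (1 - \<alpha>)"
      using sum_powr_neg_le[of \<alpha> n] assms False by simp
    finally have "E * (\<Sum>m\<in>{N..<n}. real m powr (-\<alpha>)) \<le> E * (real n powr (1 - \<alpha>) / (1 - \<alpha>))"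
      using assms by (intro mult_left_mono)
    then show ?thesis by simp
  qed (use assms in simp)
  \<comment> \<open>For \<open>\<alpha> = 1\<close> this is \<open>E / 0 = 0\<close>, harmless since then \<open>E = 0\<close>.\<close>
  define K where "K = \<bar>u N\<bar> + E / (1 - \<alpha>)"
  have "a n \<le> K * real n powr (-\<alpha>)" if n: "n \<ge> N" for n
  proof -
    have n1: "real n \<ge> 1" using n assms by simp
    have "1 \<le> real n powr (1 - \<alpha>)"
      using n1 assms by (simp add: ge_one_powr_ge_zero)
    then have "\<bar>u N\<bar> \<le> \<bar>u N\<bar> * real n powr (1 - \<alpha>)"
      by (simp add: mult_le_cancel_left1)
    moreover have "real n * a n \<le> u n"
      using nonneg[OF n] assms by (simp add: u_def mult_right_mono)
    ultimately have "real n * a n \<le> K * real n powr (1 - \<alpha>)"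
      using telescope[OF n] sum_le[of n] unfolding K_def by (simp add: algebra_simps)
    also have "real n powr (1 - \<alpha>) = real n * real n powr (-\<alpha>)"
      using n1 by (simp add: powr_diff powr_minus field_simps)
    finally show ?thesis using n1 by simp
  qed
  then show ?thesis by blast
qed

text \<open>The weight \<open>x + 2C\<close> is chosen so that it absorbs the error \<open>C/x\<^sup>2\<close>:
  the two sides differ by \<open>C (x - 2C)/x\<^sup>2\<close>.\<close>

lemma weighted_contraction:
  fixes x C \<tau> :: real
  assumes "x \<ge> 1" "C \<ge> 0" "x \<ge> 2 * C" "0 \<le> \<tau>" "\<tau> \<le> 1 - 1 / x + C / x\<^sup>2"
  shows "(x + 2 * C) * \<tau> \<le> x - 1 + 2 * C"
proof -
  have x0: "x > 0" using assms by simp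
  have "(x + 2 * C) * \<tau> \<le> (x + 2 * C) * (1 - 1 / x + C / x\<^sup>2)"
    using assms by (intro mult_left_mono) auto
  also have "\<dots> = (x - 1 + 2 * C) - C * (x - 2 * C) / x\<^sup>2"
    using x0 by (simp add: field_simps power2_eq_square)
  also have "\<dots> \<le> x - 1 + 2 * C"
    using assms by simp
  finally show ?thesis .
qed

lemma recurrence_bigo_powr:
  fixes a \<tau> :: "nat \<Rightarrow> real" and \<alpha> C E :: real
  assumes "0 < \<alpha>" "\<alpha> \<le> 1" "C \<ge> 0" "E \<ge> 0" "\<alpha> = 1 \<Longrightarrow> E = 0"
    and nonneg: "eventually (\<lambda>m. a m \<ge> 0) at_top"
    and contraction: "eventually (\<lambda>m. 0 \<le> \<tau> m \<and> \<tau> m \<le> 1 - 1 / real m + C / (real m)\<^sup>2) at_top"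
    and rec: "eventually (\<lambda>m. a (Suc m) \<le> \<tau> (Suc m) * a m + E * real m powr (-\<alpha>) / real (Suc m)) at_top"
  shows "a \<in> O(\<lambda>n. real n powr (-\<alpha>))"
proof -
  have contraction_Suc: "eventually (\<lambda>m. 0 \<le> \<tau> (Suc m) \<and>
      \<tau> (Suc m) \<le> 1 - 1 / real (Suc m) + C / (real (Suc m))\<^sup>2) at_top"
    using contraction by (subst eventually_sequentially_Suc)
  have "eventually (\<lambda>m. m \<ge> 1 \<and> real m \<ge> 2 * C \<and> a m \<ge> 0 \<and> 0 \<le> \<tau> (Suc m) \<and>
      \<tau> (Suc m) \<le> 1 - 1 / real (Suc m) + C / (real (Suc m))\<^sup>2 \<and>
      a (Suc m) \<le> \<tau> (Suc m) * a m + E * real m powr (-\<alpha>) / real (Suc m)) at_top"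
    using nonneg contraction_Suc rec eventually_ge_at_top[of 1] eventually_ge_at_top[of "nat \<lceil>2 * C\<rceil>"]
    by eventually_elim (simp add: nat_ceiling_le_eq)
  then obtain N where N: "\<And>m. m \<ge> N \<Longrightarrow> m \<ge> 1 \<and> real m \<ge> 2 * C \<and> a m \<ge> 0 \<and> 0 \<le> \<tau> (Suc m) \<and>
      \<tau> (Suc m) \<le> 1 - 1 / real (Suc m) + C / (real (Suc m))\<^sup>2 \<and>
      a (Suc m) \<le> \<tau> (Suc m) * a m + E * real m powr (-\<alpha>) / real (Suc m)"
    by (auto simp: eventually_at_top_linorder)
  have weighted: "(real m + 1 + 2 * C) * a (Suc m) \<le> (real m + 2 * C) * a m + ((1 + 2 * C) * E) * real m powr (-\<alpha>)"
    if m: "m \<ge> N" for m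
  proof -
    note Nm = N[OF m]
    have "(real m + 1 + 2 * C) * \<tau> (Suc m) \<le> real m + 2 * C"
      using weighted_contraction[of "real (Suc m)" C "\<tau> (Suc m)"] Nm assms by (simp add: add_ac)
    then have first: "(real m + 1 + 2 * C) * (\<tau> (Suc m) * a m) \<le> (real m + 2 * C) * a m"
      using Nm by (metis mult.assoc mult_right_mono)
    have "(real m + 1 + 2 * C) / real (Suc m) \<le> 1 + 2 * C"
      using assms by (simp add: pos_divide_le_eq algebra_simps)
    then have second: "(real m + 1 + 2 * C) * (E * real m powr (-\<alpha>) / real (Suc m))
        \<le> ((1 + 2 * C) * E) * real m powr (-\<alpha>)"
      using mult_right_mono[of _ _ "E * real m powr (-\<alpha>)"] assms by (simp add: field_simps)
    have "(real m + 1 + 2 * C) * a (Suc m)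
        \<le> (real m + 1 + 2 * C) * (\<tau> (Suc m) * a m + E * real m powr (-\<alpha>) / real (Suc m))"
      using Nm assms by (intro mult_left_mono) auto
    then show ?thesis using first second by (simp add: distrib_left)
  qed
  obtain K where K: "\<And>n. n \<ge> N \<Longrightarrow> a n \<le> K * real n powr (-\<alpha>)"
    using weighted_recurrence_bound[of \<alpha> "2 * C" "(1 + 2 * C) * E" N a] N weighted assms by auto
  show ?thesis
  proof (rule bigoI[of _ K])
    show "eventually (\<lambda>n. norm (a n) \<le> K * norm (real n powr (-\<alpha>))) at_top"
      using eventually_ge_at_top[of N] by eventually_elim (use K N in auto)
  qed
qed

lemma bigo_imp_eventually_le:
  fixes f g h :: "nat \<Rightarrow> real"
  assumes "(\<lambda>n. f n - g n) \<in> O(h)"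
  shows "\<exists>C>0. eventually (\<lambda>n. f n \<le> g n + C * \<bar>h n\<bar>) at_top"
proof -
  obtain C where C: "C > 0" "eventually (\<lambda>n. norm (f n - g n) \<le> C * norm (h n)) at_top"
    using landau_o.bigE[OF assms] by blast
  from C(2) have "eventually (\<lambda>n. f n \<le> g n + C * \<bar>h n\<bar>) at_top"
    by eventually_elim (simp add: abs_le_iff)
  with C(1) show ?thesis by blast
qed

lemma bigo_powr_imp_eventually_le:
  fixes f :: "nat \<Rightarrow> real" and e e' :: real
  assumes "f \<in> O(\<lambda>n. real n powr e)" "e \<le> e'"
  shows "\<exists>K>0. eventually (\<lambda>n. f n \<le> K * real n powr e') at_top"
proof -
  obtain K where K: "K > 0" "eventually (\<lambda>n. norm (f n) \<le> K * norm (real n powr e)) at_top"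
    using landau_o.bigE[OF assms(1)] by blast
  have "eventually (\<lambda>n. f n \<le> K * real n powr e') at_top"
    using K(2) eventually_ge_at_top[of 1]
  proof eventually_elim
    case (elim n)
    then have "real n powr e \<le> real n powr e'" using assms(2) by (intro powr_mono) auto
    then have "K * real n powr e \<le> K * real n powr e'" using K(1) by simp
    with elim show ?case by simp
  qed
  with K(1) show ?thesis by blast
qed

lemma t_zero_upper_bound:
  fixes t :: "nat \<Rightarrow> real"
  assumes "(\<lambda>n. t n - (1 / (fact 0 * real n ^ 0)) * (1 - 1 / real n)) \<in> O(\<lambda>n. 1 / real n ^ (0 + 2))"
  shows "\<exists>C\<ge>0. eventually (\<lambda>n. t n \<le> 1 - 1 / real n + C / (real n)\<^sup>2) at_top"
proof -
  obtain C where "C > 0"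
    "eventually (\<lambda>n. t n \<le> 1 / (fact 0 * real n ^ 0) * (1 - 1 / real n) + C * \<bar>1 / real n ^ (0 + 2)\<bar>) at_top"
    using bigo_imp_eventually_le[OF assms] by blast
  then show ?thesis by (intro exI[of _ C]) (simp add: power2_eq_square)
qed

lemma t_pos_upper_bound:
  fixes t :: "nat \<Rightarrow> real"
  assumes "(\<lambda>n. t n - (1 / (fact k * real n ^ k)) * (1 - 1 / real n)) \<in> O(\<lambda>n. 1 / real n ^ (k + 2))"
    and "k \<ge> 1"
  shows "\<exists>B\<ge>0. eventually (\<lambda>n. t n \<le> B / real n) at_top"
proof -
  obtain C where C: "C > 0"
    "eventually (\<lambda>n. t n \<le> 1 / (fact k * real n ^ k) * (1 - 1 / real n) + C * \<bar>1 / real n ^ (k + 2)\<bar>) at_top"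
    using bigo_imp_eventually_le[OF assms(1)] by blast
  have "eventually (\<lambda>n. t n \<le> (1 + C) / real n) at_top"
    using C(2) eventually_ge_at_top[of 1]
  proof eventually_elim
    case (elim n)
    then have n1: "real n \<ge> 1" by simp
    have "real n \<le> real n ^ k"
      using n1 assms(2) power_increasing[of 1 k "real n"] by simp
    also have "\<dots> \<le> fact k * real n ^ k"
      using mult_right_mono[OF fact_ge_1, of "real n ^ k" k] n1 by simp
    finally have "1 / (fact k * real n ^ k) \<le> 1 / real n"
      using n1 by (intro divide_left_mono) auto
    moreover have "1 - 1 / real n \<le> 1" "0 \<le> 1 / (fact k * real n ^ k)" using n1 by auto
    ultimately have main: "1 / (fact k * real n ^ k) * (1 - 1 / real n) \<le> 1 / real n"
      by (metis mult_left_mono mult.right_neutral order_trans)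
    have "real n \<le> real n ^ (k + 2)"
      using n1 power_increasing[of 1 "k + 2" "real n"] by simp
    then have "1 / real n ^ (k + 2) \<le> 1 / real n"
      using n1 by (intro divide_left_mono) auto
    then have "C * \<bar>1 / real n ^ (k + 2)\<bar> \<le> C / real n"
      using C(1) n1 by (simp add: mult_left_mono divide_inverse)
    with elim main show ?case by (simp add: add_divide_distrib)
  qed
  with C(1) show ?thesis by (intro exI[of _ "1 + C"]) auto
qed

lemma sseq_nonneg:
  assumes "\<And>j n. n \<ge> 1 \<Longrightarrow> t j n \<ge> 0"
  shows "sseq t j n \<ge> 0"
  using assms by (induction t j n rule: sseq.induct) (auto intro!: sum_nonneg)

lemma sseq_Suc:
  assumes "m \<ge> 1"
  shows "sseq t j (Suc m) = (\<Sum>i<j. sseq t i m * t (j - i) (Suc m)) + sseq t j m * t 0 (Suc m)"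
  using assms by (cases m) (simp_all add: lessThan_Suc_atMost[symmetric])

lemma sseq_Suc_eventually_le:
  fixes t :: "nat \<Rightarrow> nat \<Rightarrow> real" and B K :: "nat \<Rightarrow> real" and \<alpha> :: real
  assumes nonneg: "\<And>j n. n \<ge> 1 \<Longrightarrow> t j n \<ge> 0"
    and t_pos: "\<And>k. k \<ge> 1 \<Longrightarrow> eventually (\<lambda>n. t k n \<le> B k / real n) at_top"
    and s_bound: "\<And>i. i < j \<Longrightarrow> eventually (\<lambda>n. sseq t i n \<le> K i * real n powr (-\<alpha>)) at_top"
  shows "eventually (\<lambda>m. sseq t j (Suc m) \<le>
    t 0 (Suc m) * sseq t j m + (\<Sum>i<j. K i * B (j - i)) * real m powr (-\<alpha>) / real (Suc m)) at_top"
proof -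
  have s_nonneg: "\<And>i n. sseq t i n \<ge> 0" using sseq_nonneg nonneg by blast
  have "eventually (\<lambda>m. \<forall>i\<in>{..<j}.
      sseq t i m * t (j - i) (Suc m) \<le> K i * B (j - i) * (real m powr (-\<alpha>) / real (Suc m))) at_top"
  proof (intro eventually_ball_finite ballI)
    fix i assume "i \<in> {..<j}"
    then have i: "i < j" "j - i \<ge> 1" by auto
    have "eventually (\<lambda>m. t (j - i) (Suc m) \<le> B (j - i) / real (Suc m)) at_top"
      using t_pos[OF i(2)] by (subst eventually_sequentially_Suc)
    with s_bound[OF i(1)] show "eventually (\<lambda>m. sseq t i m * t (j - i) (Suc m)
        \<le> K i * B (j - i) * (real m powr (-\<alpha>) / real (Suc m))) at_top"
    proof eventually_elim
      case (elim m)
      then have "sseq t i m * t (j - i) (Suc m) \<le> K i * real m powr (-\<alpha>) * (B (j - i) / real (Suc m))"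
        using s_nonneg[of i m] nonneg[of "Suc m"] by (intro mult_mono) auto
      then show ?case by (simp add: field_simps)
    qed
  qed simp
  then show ?thesis
    using eventually_ge_at_top[of 1]
  proof eventually_elim
    case (elim m)
    have "(\<Sum>i<j. sseq t i m * t (j - i) (Suc m))
        \<le> (\<Sum>i<j. K i * B (j - i)) * (real m powr (-\<alpha>) / real (Suc m))"
      unfolding sum_distrib_right using elim(1) by (intro sum_mono) auto
    then show ?case using sseq_Suc[OF elim(2), of t j] by (simp add: mult.commute)
  qed
qed

lemma sseq_bigo_step:
  fixes t :: "nat \<Rightarrow> nat \<Rightarrow> real" and B :: "nat \<Rightarrow> real" and C :: real
  assumes nonneg: "\<And>j n. n \<ge> 1 \<Longrightarrow> t j n \<ge> 0"
    and "C \<ge> 0" and t_zero: "eventually (\<lambda>n. t 0 n \<le> 1 - 1 / real n + C / (real n)\<^sup>2) at_top"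
    and t_pos: "\<And>k. k \<ge> 1 \<Longrightarrow> B k \<ge> 0 \<and> eventually (\<lambda>n. t k n \<le> B k / real n) at_top"
    and IH: "\<And>i. i < j \<Longrightarrow> sseq t i \<in> O(\<lambda>n. real n powr (- 1 / real (i + 1)))"
  shows "sseq t j \<in> O(\<lambda>n. real n powr (- 1 / real (j + 1)))"
proof -
  define \<alpha> where "\<alpha> = 1 / real (j + 1)"
  have "\<forall>i<j. \<exists>K>0. eventually (\<lambda>n. sseq t i n \<le> K * real n powr (-\<alpha>)) at_top"
    using IH by (auto intro!: bigo_powr_imp_eventually_le simp: \<alpha>_def frac_le)
  then obtain K where K: "\<And>i. i < j \<Longrightarrow> K i > 0"
    "\<And>i. i < j \<Longrightarrow> eventually (\<lambda>n. sseq t i n \<le> K i * real n powr (-\<alpha>)) at_top"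
    by metis
  define E where "E = (\<Sum>i<j. K i * B (j - i))"
  have "sseq t j \<in> O(\<lambda>n. real n powr (-\<alpha>))"
  proof (rule recurrence_bigo_powr[OF _ _ \<open>C \<ge> 0\<close>])
    show "0 \<le> E" unfolding E_def using K(1) t_pos
      by (intro sum_nonneg mult_nonneg_nonneg) (auto simp: less_imp_le)
    show "\<alpha> = 1 \<Longrightarrow> E = 0" unfolding \<alpha>_def E_def by simp
    show "eventually (\<lambda>m. 0 \<le> t 0 m \<and> t 0 m \<le> 1 - 1 / real m + C / (real m)\<^sup>2) at_top"
      using t_zero eventually_ge_at_top[of 1] by eventually_elim (simp add: nonneg)
    show "eventually (\<lambda>m. sseq t j (Suc m) \<le> t 0 (Suc m) * sseq t j m + E * real m powr (-\<alpha>) / real (Suc m)) at_top"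
      unfolding E_def using nonneg t_pos K(2) by (intro sseq_Suc_eventually_le) auto
  qed (simp_all add: \<alpha>_def sseq_nonneg nonneg)
  then show ?thesis by (simp add: \<alpha>_def)
qed

theorem mainTheorem10:
  fixes t :: "nat \<Rightarrow> nat \<Rightarrow> real"
  assumes nonneg: "\<And>j n. n \<ge> 1 \<Longrightarrow> t j n \<ge> 0"
    and asym: "\<And>j. (\<lambda>n. t j n - (1 / (fact j * real n ^ j)) * (1 - 1 / real n))
                 \<in> O(\<lambda>n. 1 / real n ^ (j + 2))"
  shows "\<And>j. (\<lambda>n. sseq t j n) \<in> O(\<lambda>n. real n powr (- 1 / real (j + 1)))"
proof -
  fix j
  obtain C where C: "C \<ge> 0" "eventually (\<lambda>n. t 0 n \<le> 1 - 1 / real n + C / (real n)\<^sup>2) at_top"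
    using t_zero_upper_bound[OF asym[of 0]] by blast
  have "\<forall>k\<ge>1. \<exists>B\<ge>0. eventually (\<lambda>n. t k n \<le> B / real n) at_top"
    using t_pos_upper_bound[OF asym] by blast
  then obtain B where B: "\<And>k. k \<ge> 1 \<Longrightarrow> B k \<ge> 0 \<and> eventually (\<lambda>n. t k n \<le> B k / real n) at_top"
    by metis
  show "(\<lambda>n. sseq t j n) \<in> O(\<lambda>n. real n powr (- 1 / real (j + 1)))"
  proof (induction j rule: less_induct)
    case (less j)
    show ?case by (rule sseq_bigo_step[of t C B j, OF nonneg C B less])
  qed
qed

end
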